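(* Assume the setting of the context and suppose Assumption (A4) holds. Let $c_1$ be the constant of the lower bound $d_{G^n}(x,y)\ge c_1\alpha(n)d_E(x,y)$ in (A4)(a). Then for every $r,\varepsilon>0$ there exist a finite set $\mathcal{X}\subseteq\overline{B}_F(\rho,r/c_1)\cap F^*$ and an integer $n_0$ such that $(B_{G^n}(g_n(x),\alpha(n)\varepsilon))_{x\in\mathcal{X}}$ is a cover of $B_{G^n}(\rho,\alpha(n)r)$ whenever $n\geq n_0$.
   Context: Let $(E,d_E)$ be a metric space and $F\subseteq E$ such that $F\cap\overline{B}_E(x,r)$ is compact for all $x\in E$, $r>0$ ($\overline{B}_E$, $B_E$ closed and open balls in $E$). Let $d_F:=d_E|_{F\times F}$, $B_F(x,r)$, $\overline{B}_F(x,r)$ open and closed balls in $(F,d_F)$, and $\rho\in F$. For a locally finite connected graph $G$ with at least two vertices: $d_G$ is the shortest-path metric, $B_G(x,r)$ the open $d_G$-ball; $\mu^G$ a symmetric weight with $\mu^G_{xy}>0$ iff $\{x,y\}$ is an edge; $X^G$ the discrete time simple random walk with $P_G(x,y)=\mu^G_{xy}/\sum_z\mu^G_{xz}$; generator $\mathcal{L}_Gf(x)=\sum_yP_G(x,y)(f(y)-f(x))$. Parabolic Harnack inequality (PHI): with $Q_G(x,R,T):=[0,T]\times B_G(x,R)$, $Q^-_G:=[\frac14T,\frac12T]\times B_G(x,\frac12R)$, $Q^+_G:=[\frac34T,T)\times B_G(x,\frac12R)$, a function $u$ on $([0,T]\cap\mathbb{Z})\times B_G(x,R+1)$ is caloric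 on $Q_G(x,R,T)$ if $u(n+1,y)-u(n,y)=\mathcal{L}_Gu(n,y)$ for integers $0\le n\le T-1$, $y\in B_G(x,R)$; PHI with constant $C_H$ holds for $Q_G(x,R,T)$ if every non-negative caloric $u$ on it satisfies $\sup_{Q^-_G}\hat u\le C_H\inf_{Q^+_G}\hat u$, $\hat u(n,y):=u(n+1,y)+u(n,y)$. $(G^n)_{n\ge1}$ are such graphs with $V(G^n)\subseteq E$ and distinguished vertex $\rho$. $(\alpha(n)),(\gamma(n))$ are non-negative sequences diverging to $\infty$. For $x\in E$, $g_n(x)$ is a point of $V(G^n)$ minimising $d_E(x,\cdot)$. Assumption (A4): for some $\kappa\ge2$ and $C_H<\infty$: (a) there is $c_1>0$ with $d_{G^n}(x,y)\ge c_1\alpha(n)d_E(x,y)$ for all $x,y\in V(G^n)$, $n\ge1$, and a non-negative $\tilde\alpha(n)=o(\alpha(n))$ such that for each $r>0$ there are $c_2<\infty$, $n_0$ with $d_{G^n}(x,y)\le c_2\alpha(n)d_E(x,y)+\tilde\alpha(n)$ for all $x,y\in V(G^n)\cap B_E(\rho,r)$, $n\ge n_0$; (b) for every $r>0$, $V(G^n)\cap\overline{B}_E(\rho,r)\to\overline{B}_F(\rho,r)$ in the Hausdorff topology on non-empty compact subsets of $(E,d_E)$; (c) for every $x\in V(G^n)$, $n\ge1$, there is a positive integer $s_{G^n}(x)$ such that PHI with constant $C_H$ holds for $Q_{G^n}(x,R,R^\kappa)$ for all $R\ge s_{G^n}(x)$, and there is a dense subset $F^*\subseteq F$ with $\alpha(n)^{-1}s_{G^n}(g_n(x))\to0$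 for every $x\in F^*$; (d) $\alpha(n)^\kappa=O(\gamma(n))$. *)

theory Defs
  imports "HOL-Analysis.Analysis" "HOL-Library.Landau_Symbols"
begin

definition hausdorff_dist :: "'a::metric_space set \<Rightarrow> 'a set \<Rightarrow> real" where
  "hausdorff_dist A B = max (SUP a\<in>A. infdist a B) (SUP b\<in>B. infdist b A)"

definition hausdorff_converges :: "(nat \<Rightarrow> 'a::metric_space set) \<Rightarrow> 'a set \<Rightarrow> bool" where
  "hausdorff_converges A B \<longleftrightarrow>
     (\<forall>n. compact (A n) \<and> A n \<noteq> {}) \<and> compact B \<and> B \<noteq> {} \<and>
     (\<lambda>n. hausdorff_dist (A n) B) \<longlonglongrightarrow> 0"

definition walk :: "('a \<Rightarrow> 'a \<Rightarrow> bool) \<Rightarrow> 'a list \<Rightarrow> bool" where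
  "walk Adj xs \<longleftrightarrow> xs \<noteq> [] \<and> (\<forall>i. Suc i < length xs \<longrightarrow> Adj (xs ! i) (xs ! Suc i))"

definition lf_connected_graph :: "'a set \<Rightarrow> ('a \<Rightarrow> 'a \<Rightarrow> bool) \<Rightarrow> bool" where
  "lf_connected_graph V Adj \<longleftrightarrow>
     (\<forall>x y. Adj x y \<longrightarrow> x \<in> V \<and> y \<in> V) \<and>
     (\<forall>x y. Adj x y \<longrightarrow> Adj y x) \<and>
     (\<forall>x. \<not> Adj x x) \<and>
     (\<forall>x\<in>V. finite {y. Adj x y}) \<and>
     (\<forall>x\<in>V. \<forall>y\<in>V. \<exists>xs. walk Adj xs \<and> hd xs = x \<and> last xs = y) \<and>
     (\<exists>x\<in>V. \<exists>y\<in>V. x \<noteq> y)"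

definition gdist :: "('a \<Rightarrow> 'a \<Rightarrow> bool) \<Rightarrow> 'a \<Rightarrow> 'a \<Rightarrow> nat" where
  "gdist Adj x y = (LEAST k. \<exists>xs. walk Adj xs \<and> hd xs = x \<and> last xs = y \<and> length xs = Suc k)"

definition gball :: "'a set \<Rightarrow> ('a \<Rightarrow> 'a \<Rightarrow> bool) \<Rightarrow> 'a \<Rightarrow> real \<Rightarrow> 'a set" where
  "gball V Adj x R = {y \<in> V. real (gdist Adj x y) < R}"

definition edge_weight :: "('a \<Rightarrow> 'a \<Rightarrow> bool) \<Rightarrow> ('a \<Rightarrow> 'a \<Rightarrow> real) \<Rightarrow> bool" where
  "edge_weight Adj mu \<longleftrightarrow> (\<forall>x y. mu x y = mu y x) \<and> (\<forall>x y. 0 \<le> mu x y)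
      \<and> (\<forall>x y. 0 < mu x y \<longleftrightarrow> Adj x y)"

definition trans_prob :: "('a \<Rightarrow> 'a \<Rightarrow> bool) \<Rightarrow> ('a \<Rightarrow> 'a \<Rightarrow> real) \<Rightarrow> 'a \<Rightarrow> 'a \<Rightarrow> real" where
  "trans_prob Adj mu x y = mu x y / (\<Sum>z\<in>{z. Adj x z}. mu x z)"

definition generator :: "('a \<Rightarrow> 'a \<Rightarrow> bool) \<Rightarrow> ('a \<Rightarrow> 'a \<Rightarrow> real) \<Rightarrow> ('a \<Rightarrow> real) \<Rightarrow> 'a \<Rightarrow> real" where
  "generator Adj mu f x = (\<Sum>y\<in>{y. Adj x y}. trans_prob Adj mu x y * (f y - f x))"

definition caloric ::
  "'a set \<Rightarrow> ('a \<Rightarrow> 'a \<Rightarrow> bool) \<Rightarrow> ('a \<Rightarrow> 'a \<Rightarrow> real) \<Rightarrow> 'a \<Rightarrow> real \<Rightarrow> real \<Rightarrow> (nat \<Rightarrow> 'a \<Rightarrow> real) \<Rightarrow> bool" where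
  "caloric V Adj mu x R T u \<longleftrightarrow>
     (\<forall>n::nat. \<forall>y. real n \<le> T - 1 \<and> y \<in> gball V Adj x R \<longrightarrow>
        u (Suc n) y - u n y = generator Adj mu (u n) y)"

text \<open>The function u is only
  meaningful on the domain ([0,T] \<inter> Z) x B(x,R+1); non-negativity is required there.
  The inequality sup over Q- of hat u <= CH * inf over Q+ of hat u is written pointwise,
  where hat u(n,y) = u(n+1,y) + u(n,y); only times n with n+1 in [0,T] are used (so that
  hat u(n,y) is defined).\<close>
definition PHI ::
  "'a set \<Rightarrow> ('a \<Rightarrow> 'a \<Rightarrow> bool) \<Rightarrow> ('a \<Rightarrow> 'a \<Rightarrow> real) \<Rightarrow> real \<Rightarrow> 'a \<Rightarrow> real \<Rightarrow> real \<Rightarrow> bool" where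
  "PHI V Adj mu CH x R T \<longleftrightarrow>
     (\<forall>u. (\<forall>n::nat. \<forall>y. real n \<le> T \<and> y \<in> gball V Adj x (R + 1) \<longrightarrow> 0 \<le> u n y) \<and>
          caloric V Adj mu x R T u \<longrightarrow>
        (\<forall>n m :: nat. \<forall>y z.
           T / 4 \<le> real n \<and> real n \<le> T / 2 \<and> real n + 1 \<le> T \<and> y \<in> gball V Adj x (R / 2) \<and>
           3 * T / 4 \<le> real m \<and> real m < T \<and> real m + 1 \<le> T \<and> z \<in> gball V Adj x (R / 2) \<longrightarrow>
           u (Suc n) y + u n y \<le> CH * (u (Suc m) z + u m z)))"

end

theory Submission
  imports Defs
begin

text \<open>Put R = r / c1 and fix a small \<delta> > 0. Take a finite \<delta>/8-net X of F \<inter> B(\<rho>, R - \<delta>/4)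
  inside the dense set F*. Given a vertex y with d_G(\<rho>, y) < \<alpha> r, walk back about c1 \<alpha> \<delta> steps
  from y along a geodesic from \<rho>; by the lower bound in (a) the vertex v reached is \<delta>-close to y
  and lies in B(\<rho>, R - \<delta>/2). Hausdorff convergence (b) puts a point of F near v, hence a net
  point x near v, and a vertex near x, so g_n(x) is 2\<delta>-close to y. The upper bound in (a) then
  gives d_G(g_n(x), y) \<le> 2 c2 \<alpha> \<delta> + \<alpha>t, which is below \<alpha> \<epsilon> for \<delta> small and n large.\<close>

lemma gdist_le_walk:
  assumes "walk Adj xs" "hd xs = x" "last xs = y" "length xs = Suc k"
  shows "gdist Adj x y \<le> k"
  unfolding gdist_def using assms by (intro Least_le) blast

lemma shortest_walk_exists:
  assumes "walk Adj xs" "hd xs = x" "last xs = y"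
  obtains ys where "walk Adj ys" "hd ys = x" "last ys = y" "length ys = Suc (gdist Adj x y)"
proof -
  have "length xs = Suc (length xs - 1)" using assms(1) unfolding walk_def by (cases xs) auto
  with assms have "\<exists>k ys. walk Adj ys \<and> hd ys = x \<and> last ys = y \<and> length ys = Suc k" by blast
  from LeastI_ex[OF this] that show ?thesis unfolding gdist_def by blast
qed

lemma walk_take:
  assumes "walk Adj xs" "j < length xs"
  shows "walk Adj (take (Suc j) xs)" "hd (take (Suc j) xs) = hd xs"
    "last (take (Suc j) xs) = xs ! j" "length (take (Suc j) xs) = Suc j"
proof -
  show "length (take (Suc j) xs) = Suc j" using assms(2) by simp
  then show "last (take (Suc j) xs) = xs ! j" by (subst last_conv_nth) auto
  show "walk Adj (take (Suc j) xs)" "hd (take (Suc j) xs) = hd xs"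
    using assms unfolding walk_def by (auto simp: hd_take)
qed

lemma walk_drop:
  assumes "walk Adj xs" "j < length xs"
  shows "walk Adj (drop j xs)" "hd (drop j xs) = xs ! j" "last (drop j xs) = last xs"
    "length (drop j xs) = length xs - j"
  using assms unfolding walk_def by (auto simp: hd_drop_conv_nth)

lemma gdist_split:
  assumes edges: "\<And>a b. Adj a b \<Longrightarrow> a \<in> V \<and> b \<in> V" and "x \<in> V"
    and "walk Adj xs" "hd xs = x" "last xs = y"
  obtains v where "v \<in> V" "gdist Adj x v \<le> gdist Adj x y - m" "gdist Adj v y \<le> m"
proof -
  obtain ys where ys: "walk Adj ys" "hd ys = x" "last ys = y" "length ys = Suc (gdist Adj x y)"
    using shortest_walk_exists assms(3-5) by metis
  define j where "j = gdist Adj x y - m"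
  have j: "j < length ys" using ys(4) by (simp add: j_def)
  have "ys ! j \<in> V"
  proof (cases j)
    case 0
    then show ?thesis using ys(1,2) \<open>x \<in> V\<close> by (simp add: walk_def hd_conv_nth)
  next
    case (Suc i)
    then have "Adj (ys ! i) (ys ! j)" using ys(1) j by (simp add: walk_def)
    then show ?thesis using edges by blast
  qed
  moreover have "gdist Adj x (ys ! j) \<le> j"
    using walk_take[OF ys(1) j] ys(2) by (intro gdist_le_walk) auto
  moreover have "gdist Adj (ys ! j) y \<le> gdist Adj x y - j"
    using walk_drop[OF ys(1) j] ys gdist_le_walk[of Adj "drop j ys" "ys ! j" y "gdist Adj x y - j"]
    by (simp add: j_def Suc_diff_le)
  then have "gdist Adj (ys ! j) y \<le> m" by (simp add: j_def)
  ultimately show ?thesis using that j_def by blast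
qed

lemma gball_vertex_near_inner_vertex:
  assumes graph: "lf_connected_graph V Adj"
    and lower: "\<And>x y. x \<in> V \<Longrightarrow> y \<in> V \<Longrightarrow> D * dist x y \<le> gdist Adj x y"
    and "\<rho> \<in> V" "y \<in> gball V Adj \<rho> (D * R)" "0 < \<delta>" "\<delta> \<le> 2 * R" "2 \<le> D * \<delta>"
  obtains v where "v \<in> V" "dist \<rho> v \<le> R - \<delta> / 2" "dist v y \<le> \<delta>"
proof -
  have D: "D > 0" using \<open>0 < \<delta>\<close> \<open>2 \<le> D * \<delta>\<close> by (smt (verit) mult_nonpos_nonneg)
  have y: "y \<in> V" "gdist Adj \<rho> y < D * R" using \<open>y \<in> gball V Adj \<rho> (D * R)\<close> by (auto simp: gball_def)
  \<comment> \<open>\<open>v\<close> will be \<open>m\<close> steps before \<open>y\<close> on a geodesic from \<open>\<rho>\<close>\<close>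
  define m where "m = nat \<lfloor>D * \<delta>\<rfloor>"
  have "real m = of_int \<lfloor>D * \<delta>\<rfloor>" using D \<open>0 < \<delta>\<close> by (simp add: m_def)
  then have m: "real m \<le> D * \<delta>" "D * \<delta> - 1 < real m" using floor_correct[of "D * \<delta>"] by auto
  have edges: "\<And>a b. Adj a b \<Longrightarrow> a \<in> V \<and> b \<in> V" using graph by (simp add: lf_connected_graph_def)
  obtain xs where "walk Adj xs" "hd xs = \<rho>" "last xs = y"
    using graph \<open>\<rho> \<in> V\<close> y(1) unfolding lf_connected_graph_def by blast
  then obtain v where v: "v \<in> V" "gdist Adj \<rho> v \<le> gdist Adj \<rho> y - m" "gdist Adj v y \<le> m"
    using gdist_split edges \<open>\<rho> \<in> V\<close> by metis
  have "D * dist v y \<le> D * \<delta>" using lower[OF v(1) y(1)] v(3) m(1) by linarith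
  then have "dist v y \<le> \<delta>" using D by simp
  moreover have "D * dist \<rho> v \<le> D * (R - \<delta> / 2)"
  proof (cases "m \<le> gdist Adj \<rho> y")
    case True
    then have "real (gdist Adj \<rho> v) \<le> real (gdist Adj \<rho> y) - real m" using v(2) by linarith
    then show ?thesis using lower[OF \<open>\<rho> \<in> V\<close> v(1)] y(2) m(2) \<open>2 \<le> D * \<delta>\<close>
      by (simp add: algebra_simps)
  next
    case False
    then have "D * dist \<rho> v \<le> 0" using lower[OF \<open>\<rho> \<in> V\<close> v(1)] v(2) by simp
    moreover have "0 \<le> D * (R - \<delta> / 2)" using D \<open>\<delta> \<le> 2 * R\<close> by simp
    ultimately show ?thesis by linarith
  qed
  then have "dist \<rho> v \<le> R - \<delta> / 2" using D by simp
  ultimately show ?thesis using that v(1) by blast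
qed

lemma infdist_le_hausdorff_dist:
  assumes "compact A" "a \<in> A"
  shows "infdist a B \<le> hausdorff_dist A B"
proof -
  have "bounded ((\<lambda>a. infdist a B) ` A)"
    by (intro compact_imp_bounded compact_continuous_image continuous_on_infdist continuous_on_id assms)
  then have "infdist a B \<le> (SUP a\<in>A. infdist a B)"
    by (intro cSUP_upper assms bounded_imp_bdd_above)
  then show ?thesis unfolding hausdorff_dist_def by simp
qed

lemma hausdorff_dist_commute: "hausdorff_dist A B = hausdorff_dist B A"
  by (simp add: hausdorff_dist_def max.commute)

lemma hausdorff_dist_lessE:
  assumes "compact A" "B \<noteq> {}" "a \<in> A" "hausdorff_dist A B < e"
  obtains b where "b \<in> B" "dist a b < e"
proof -
  have "Inf (dist a ` B) < e"
    using infdist_le_hausdorff_dist[OF assms(1,3), of B] assms(2,4) by (simp add: infdist_notempty)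
  then show ?thesis using cInf_lessD[of "dist a ` B"] assms(2) that by blast
qed

lemma hausdorff_converges_eventually_less:
  assumes "hausdorff_converges (\<lambda>n. A (Suc n)) B" "0 < e"
  shows "eventually (\<lambda>n. hausdorff_dist (A n) B < e) sequentially"
proof -
  have "eventually (\<lambda>n. hausdorff_dist (A (Suc n)) B < e) sequentially"
    using assms unfolding hausdorff_converges_def by (intro order_tendstoD(2)) auto
  then show ?thesis by (rule eventually_sequentially_Suc[THEN iffD1])
qed

lemma finite_net_in_dense_subset:
  fixes S :: "'a::metric_space set"
  assumes "compact K" "K \<subseteq> closure S" "e > 0"
  obtains X where "finite X" "X \<subseteq> S" "\<And>x. x \<in> X \<Longrightarrow> \<exists>k\<in>K. dist x k < e"
    "\<And>k. k \<in> K \<Longrightarrow> \<exists>x\<in>X. dist k x < e"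
proof -
  obtain T where T: "T \<subseteq> K" "finite T" "K \<subseteq> (\<Union>t\<in>T. ball t (e / 2))"
    using compactE_image[OF assms(1), of K "\<lambda>t. ball t (e / 2)"] assms(3) by force
  have "\<forall>t\<in>T. \<exists>x\<in>S. dist t x < e / 2"
    using T(1) assms(2,3) by (intro ballI closure_approachableD) auto
  then obtain p where p: "\<And>t. t \<in> T \<Longrightarrow> p t \<in> S \<and> dist t (p t) < e / 2" by metis
  show ?thesis
  proof (rule that[of "p ` T"])
    show "\<exists>k\<in>K. dist x k < e" if "x \<in> p ` T" for x
      using that p T(1) assms(3) by (force simp: dist_commute)
    show "\<exists>x\<in>p ` T. dist k x < e" if "k \<in> K" for k
    proof -
      obtain t where t: "t \<in> T" "dist t k < e / 2" using T(3) \<open>k \<in> K\<close> by auto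
      then have "dist k (p t) < e" using p[OF t(1)] dist_triangle[of k "p t" t] by (simp add: dist_commute)
      then show ?thesis using t(1) by blast
    qed
  qed (use T(2) p in auto)
qed

lemma finite_net_of_cball_in_dense_subset:
  assumes "compact (F \<inter> cball \<rho> r)" "F \<subseteq> closure S" "S \<subseteq> F" "0 < e"
  obtains X where "finite X" "X \<subseteq> F \<inter> cball \<rho> (r + e) \<inter> S"
    "\<And>z. z \<in> F \<inter> cball \<rho> r \<Longrightarrow> \<exists>x\<in>X. dist z x < e"
proof -
  obtain X where X: "finite X" "X \<subseteq> S" "\<And>x. x \<in> X \<Longrightarrow> \<exists>k\<in>F \<inter> cball \<rho> r. dist x k < e"
      "\<And>z. z \<in> F \<inter> cball \<rho> r \<Longrightarrow> \<exists>x\<in>X. dist z x < e"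
    using finite_net_in_dense_subset[OF assms(1) _ assms(4), of S] assms(2) by blast
  have "X \<subseteq> cball \<rho> (r + e)"
  proof
    fix x assume "x \<in> X"
    then obtain k where "k \<in> F \<inter> cball \<rho> r" "dist x k < e" using X(3) by blast
    then show "x \<in> cball \<rho> (r + e)" using dist_triangle[of \<rho> x k] dist_commute[of k x] by simp
  qed
  show ?thesis
  proof (rule that)
    show "X \<subseteq> F \<inter> cball \<rho> (r + e) \<inter> S" using X(2) assms(3) \<open>X \<subseteq> cball \<rho> (r + e)\<close> by blast
  qed (use X(1,4) in auto)
qed

lemma nearest_vertex_of_net_point_close:
  assumes compact: "compact (V \<inter> cball \<rho> R)" "compact (F \<inter> cball \<rho> R)"
    and "\<rho> \<in> V" "\<rho> \<in> F"
    and hausdorff: "hausdorff_dist (V \<inter> cball \<rho> R) (F \<inter> cball \<rho> R) < \<delta> / 8"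
    and nearest: "\<And>x. g x \<in> V \<and> (\<forall>w\<in>V. dist x (g x) \<le> dist x w)"
    and net: "X \<subseteq> F \<inter> cball \<rho> R" "\<And>z. z \<in> F \<inter> cball \<rho> (R - \<delta> / 4) \<Longrightarrow> \<exists>x\<in>X. dist z x < \<delta> / 8"
    and v: "v \<in> V" "dist \<rho> v \<le> R - \<delta> / 2" and "0 < \<delta>"
  obtains x where "x \<in> X" "dist (g x) v < 3 * \<delta> / 8"
proof -
  have "0 \<le> R" using v(2) zero_le_dist[of \<rho> v] \<open>0 < \<delta>\<close> by linarith
  then have ne: "V \<inter> cball \<rho> R \<noteq> {}" "F \<inter> cball \<rho> R \<noteq> {}" and "v \<in> V \<inter> cball \<rho> R"
    using v \<open>0 < \<delta>\<close> \<open>\<rho> \<in> V\<close> \<open>\<rho> \<in> F\<close> by auto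
  then obtain z where z: "z \<in> F \<inter> cball \<rho> R" "dist v z < \<delta> / 8"
    using hausdorff_dist_lessE[OF compact(1) ne(2) _ hausdorff] by metis
  have "dist \<rho> z \<le> R - \<delta> / 4" using dist_triangle[of \<rho> z v] v(2) z(2) \<open>0 < \<delta>\<close> by linarith
  then obtain x where x: "x \<in> X" "dist z x < \<delta> / 8" using net(2) z(1) by auto
  have "hausdorff_dist (F \<inter> cball \<rho> R) (V \<inter> cball \<rho> R) < \<delta> / 8"
    using hausdorff by (subst hausdorff_dist_commute)
  moreover have "x \<in> F \<inter> cball \<rho> R" using net(1) x(1) by blast
  ultimately obtain w where w: "w \<in> V \<inter> cball \<rho> R" "dist x w < \<delta> / 8"
    using hausdorff_dist_lessE[OF compact(2) ne(1)] by metis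
  have "dist x (g x) \<le> dist x w" using nearest[of x] w(1) by blast
  moreover have "dist (g x) v \<le> dist x (g x) + dist z x + dist v z"
    using dist_triangle[of "g x" v x] dist_triangle[of x v z] by (simp add: dist_commute)
  ultimately have "dist (g x) v < 3 * \<delta> / 8" using w(2) x(2) z(2) by linarith
  then show ?thesis using that x(1) by blast
qed

lemma gball_subset_net_gballs:
  fixes V F X :: "'a::metric_space set"
  assumes graph: "lf_connected_graph V Adj" and "\<rho> \<in> V" "\<rho> \<in> F"
    and lower: "\<And>x y. x \<in> V \<Longrightarrow> y \<in> V \<Longrightarrow> c * a * dist x y \<le> gdist Adj x y"
    and upper: "\<And>x y. x \<in> V \<inter> ball \<rho> (2 * R) \<Longrightarrow> y \<in> V \<inter> ball \<rho> (2 * R) \<Longrightarrow>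
                  gdist Adj x y \<le> C * a * dist x y + b"
    and compact: "compact (V \<inter> cball \<rho> R)" "compact (F \<inter> cball \<rho> R)"
    and hausdorff: "hausdorff_dist (V \<inter> cball \<rho> R) (F \<inter> cball \<rho> R) < \<delta> / 8"
    and nearest: "\<And>x. g x \<in> V \<and> (\<forall>w\<in>V. dist x (g x) \<le> dist x w)"
    and net: "X \<subseteq> F \<inter> cball \<rho> R" "\<And>z. z \<in> F \<inter> cball \<rho> (R - \<delta> / 4) \<Longrightarrow> \<exists>x\<in>X. dist z x < \<delta> / 8"
    and scales: "0 < \<delta>" "\<delta> \<le> R" "2 \<le> c * a * \<delta>" "0 \<le> a" "0 \<le> C" "C * \<delta> \<le> \<epsilon> / 4"
      "b \<le> a * \<epsilon> / 4" "0 < \<epsilon>"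
  shows "gball V Adj \<rho> (c * a * R) \<subseteq> (\<Union>x\<in>X. gball V Adj (g x) (a * \<epsilon>))"
proof
  fix y assume y: "y \<in> gball V Adj \<rho> (c * a * R)"
  have "0 < a" using scales(3,4) by (cases "a = 0") auto
  have "\<delta> \<le> 2 * R" using scales(1,2) by simp
  then obtain v where v: "v \<in> V" "dist \<rho> v \<le> R - \<delta> / 2" "dist v y \<le> \<delta>"
    using gball_vertex_near_inner_vertex[OF graph lower \<open>\<rho> \<in> V\<close> y scales(1) _ scales(3)]
    by blast
  obtain x where x: "x \<in> X" "dist (g x) v < 3 * \<delta> / 8"
    using nearest_vertex_of_net_point_close[OF compact \<open>\<rho> \<in> V\<close> \<open>\<rho> \<in> F\<close> hausdorff nearest net v(1,2)]
      scales(1) by blast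
  have "dist (g x) y \<le> 2 * \<delta>" using dist_triangle[of "g x" y v] v(3) x(2) scales(1) by linarith
  then have "C * a * dist (g x) y \<le> C * a * (2 * \<delta>)"
    using \<open>0 < a\<close> scales(5) by (intro mult_left_mono) auto
  moreover have "g x \<in> V \<inter> ball \<rho> (2 * R)" "y \<in> V \<inter> ball \<rho> (2 * R)"
    using nearest[of x] y dist_triangle[of \<rho> "g x" v] dist_triangle[of \<rho> y v] v x(2) scales(1,2)
    by (auto simp: gball_def dist_commute)
  ultimately have "gdist Adj (g x) y \<le> 2 * a * (C * \<delta>) + b"
    using upper[of "g x" y] by (simp add: algebra_simps)
  also have "\<dots> \<le> 2 * a * (\<epsilon> / 4) + a * \<epsilon> / 4"
  proof -
    have "a * (C * \<delta>) \<le> a * (\<epsilon> / 4)" using \<open>0 < a\<close> scales(6) by (intro mult_left_mono) auto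
    then show ?thesis using scales(7) by linarith
  qed
  also have "\<dots> < a * \<epsilon>" using \<open>0 < a\<close> scales(8) by simp
  finally show "y \<in> (\<Union>x\<in>X. gball V Adj (g x) (a * \<epsilon>))"
    using x(1) y by (auto simp: gball_def)
qed

lemma eventually_gball_subset_net_gballs:
  fixes V :: "nat \<Rightarrow> 'a::metric_space set"
  assumes graphs: "\<And>n. n \<ge> 1 \<Longrightarrow> lf_connected_graph (V n) (Adj n)"
    and rho_vertex: "\<And>n. n \<ge> 1 \<Longrightarrow> \<rho> \<in> V n" and "\<rho> \<in> F"
    and g_def: "\<And>n x. n \<ge> 1 \<Longrightarrow> g n x \<in> V n \<and> (\<forall>y\<in>V n. dist x (g n x) \<le> dist x y)"
    and alpha_nonneg: "\<And>n. 0 \<le> \<alpha> n" and alpha_lim: "filterlim \<alpha> at_top sequentially"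
    and alphat_small: "\<alpha>t \<in> o(\<alpha>)" and "0 < c1"
    and lower: "\<And>n x y. n \<ge> 1 \<Longrightarrow> x \<in> V n \<Longrightarrow> y \<in> V n \<Longrightarrow> c1 * \<alpha> n * dist x y \<le> gdist (Adj n) x y"
    and upper: "\<And>n x y. n \<ge> N0 \<Longrightarrow> n \<ge> 1 \<Longrightarrow> x \<in> V n \<inter> ball \<rho> (2 * R) \<Longrightarrow>
                  y \<in> V n \<inter> ball \<rho> (2 * R) \<Longrightarrow> gdist (Adj n) x y \<le> C * \<alpha> n * dist x y + \<alpha>t n"
    and "compact (F \<inter> cball \<rho> R)"
    and hausdorff: "hausdorff_converges (\<lambda>n. V (Suc n) \<inter> cball \<rho> R) (F \<inter> cball \<rho> R)"
    and net: "X \<subseteq> F \<inter> cball \<rho> R" "\<And>z. z \<in> F \<inter> cball \<rho> (R - \<delta> / 4) \<Longrightarrow> \<exists>x\<in>X. dist z x < \<delta> / 8"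
    and "0 < \<delta>" "\<delta> \<le> R" "0 \<le> C" "C * \<delta> \<le> \<epsilon> / 4" "0 < \<epsilon>"
  shows "eventually (\<lambda>n. gball (V n) (Adj n) \<rho> (c1 * \<alpha> n * R) \<subseteq>
           (\<Union>x\<in>X. gball (V n) (Adj n) (g n x) (\<alpha> n * \<epsilon>))) sequentially"
proof -
  have compact_V: "compact (V n \<inter> cball \<rho> R)" if "n \<ge> 1" for n
  proof -
    have "compact (V (Suc (n - 1)) \<inter> cball \<rho> R)"
      using hausdorff unfolding hausdorff_converges_def by blast
    then show ?thesis using that by simp
  qed
  have "eventually (\<lambda>n. hausdorff_dist (V n \<inter> cball \<rho> R) (F \<inter> cball \<rho> R) < \<delta> / 8) sequentially"
    using \<open>0 < \<delta>\<close> by (intro hausdorff_converges_eventually_less[OF hausdorff]) simp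
  moreover have "eventually (\<lambda>n. 2 \<le> c1 * \<alpha> n * \<delta>) sequentially"
  proof -
    have "eventually (\<lambda>n. 2 / (c1 * \<delta>) \<le> \<alpha> n) sequentially"
      using alpha_lim by (simp add: filterlim_at_top)
    then show ?thesis by (rule eventually_mono) (use \<open>0 < c1\<close> \<open>0 < \<delta>\<close> in \<open>simp add: field_simps\<close>)
  qed
  moreover have "eventually (\<lambda>n. \<alpha>t n \<le> \<alpha> n * \<epsilon> / 4) sequentially"
    using landau_o.smallD[OF alphat_small, of "\<epsilon> / 4"] \<open>0 < \<epsilon>\<close>
    by (auto elim!: eventually_mono simp: alpha_nonneg algebra_simps)
  moreover have "eventually (\<lambda>n. n \<ge> max N0 1) sequentially" by (rule eventually_ge_at_top)
  ultimately show ?thesis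
  proof eventually_elim
    case (elim n)
    then have "n \<ge> 1" "n \<ge> N0" by auto
    with elim show ?case
      using gball_subset_net_gballs[OF graphs rho_vertex \<open>\<rho> \<in> F\<close> lower upper compact_V
          \<open>compact (F \<inter> cball \<rho> R)\<close> _ g_def net \<open>0 < \<delta>\<close> \<open>\<delta> \<le> R\<close> _ alpha_nonneg
          \<open>0 \<le> C\<close> \<open>C * \<delta> \<le> \<epsilon> / 4\<close> _ \<open>0 < \<epsilon>\<close>] by blast
  qed
qed

theorem lemma3p3:
  fixes F Fstar :: "'a::metric_space set"
    and \<rho> :: 'a
    and V :: "nat \<Rightarrow> 'a set"
    and Adj :: "nat \<Rightarrow> 'a \<Rightarrow> 'a \<Rightarrow> bool"
    and mu :: "nat \<Rightarrow> 'a \<Rightarrow> 'a \<Rightarrow> real"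
    and \<alpha> \<gamma> \<alpha>t :: "nat \<Rightarrow> real"
    and g :: "nat \<Rightarrow> 'a \<Rightarrow> 'a"
    and s :: "nat \<Rightarrow> 'a \<Rightarrow> nat"
    and \<kappa> CH c1 :: real
  assumes F_loc_compact: "\<And>x r. r > 0 \<Longrightarrow> compact (F \<inter> cball x r)"
    and rho_F: "\<rho> \<in> F"
    and graphs: "\<And>n. n \<ge> 1 \<Longrightarrow> lf_connected_graph (V n) (Adj n)"
    and weights: "\<And>n. n \<ge> 1 \<Longrightarrow> edge_weight (Adj n) (mu n)"
    and rho_vertex: "\<And>n. n \<ge> 1 \<Longrightarrow> \<rho> \<in> V n"
    and alpha_nonneg: "\<And>n. 0 \<le> \<alpha> n" and alpha_lim: "filterlim \<alpha> at_top sequentially"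
    and gamma_nonneg: "\<And>n. 0 \<le> \<gamma> n" and gamma_lim: "filterlim \<gamma> at_top sequentially"
    and g_def: "\<And>n x. n \<ge> 1 \<Longrightarrow> g n x \<in> V n \<and> (\<forall>y\<in>V n. dist x (g n x) \<le> dist x y)"
    \<comment> \<open>Assumption (A4)\<close>
    and kappa: "\<kappa> \<ge> 2"
    \<comment> \<open>(a)\<close>
    and c1_pos: "c1 > 0"
    and lower: "\<And>n x y. n \<ge> 1 \<Longrightarrow> x \<in> V n \<Longrightarrow> y \<in> V n \<Longrightarrow>
                  real (gdist (Adj n) x y) \<ge> c1 * \<alpha> n * dist x y"
    and alphat_nonneg: "\<And>n. 0 \<le> \<alpha>t n"
    and alphat_small: "\<alpha>t \<in> o(\<alpha>)"
    and upper: "\<And>r. r > 0 \<Longrightarrow> \<exists>c2 n0. \<forall>n\<ge>n0. n \<ge> 1 \<longrightarrow>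
                  (\<forall>x\<in>V n \<inter> ball \<rho> r. \<forall>y\<in>V n \<inter> ball \<rho> r.
                     real (gdist (Adj n) x y) \<le> c2 * \<alpha> n * dist x y + \<alpha>t n)"
    \<comment> \<open>(b)\<close>
    and hausdorff: "\<And>r. r > 0 \<Longrightarrow>
                  hausdorff_converges (\<lambda>n. V (Suc n) \<inter> cball \<rho> r) (F \<inter> cball \<rho> r)"
    \<comment> \<open>(c)\<close>
    and s_pos: "\<And>n x. n \<ge> 1 \<Longrightarrow> x \<in> V n \<Longrightarrow> s n x \<ge> 1"
    and phi: "\<And>n x R. n \<ge> 1 \<Longrightarrow> x \<in> V n \<Longrightarrow> R \<ge> real (s n x) \<Longrightarrow>
                  PHI (V n) (Adj n) (mu n) CH x R (R powr \<kappa>)"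
    and Fstar_sub: "Fstar \<subseteq> F" and Fstar_dense: "F \<subseteq> closure Fstar"
    and s_small: "\<And>x. x \<in> Fstar \<Longrightarrow> (\<lambda>n. real (s n (g n x)) / \<alpha> n) \<longlonglongrightarrow> 0"
    \<comment> \<open>(d)\<close>
    and alpha_gamma: "(\<lambda>n. \<alpha> n powr \<kappa>) \<in> O(\<gamma>)"
  shows "\<forall>r>0. \<forall>\<epsilon>>0. \<exists>X. finite X \<and> X \<subseteq> F \<inter> cball \<rho> (r / c1) \<inter> Fstar \<and>
           (\<exists>n0\<ge>1. \<forall>n\<ge>n0.
              gball (V n) (Adj n) \<rho> (\<alpha> n * r) \<subseteq> (\<Union>x\<in>X. gball (V n) (Adj n) (g n x) (\<alpha> n * \<epsilon>)))"
proof (intro allI impI)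
  fix r \<epsilon> :: real
  assume "r > 0" "\<epsilon> > 0"
  define R where "R = r / c1"
  have R: "0 < R" "c1 * R = r" using \<open>r > 0\<close> c1_pos by (auto simp: R_def)
  obtain c2 N2 where upper_R: "\<And>n x y. n \<ge> N2 \<Longrightarrow> n \<ge> 1 \<Longrightarrow> x \<in> V n \<inter> ball \<rho> (2 * R) \<Longrightarrow>
      y \<in> V n \<inter> ball \<rho> (2 * R) \<Longrightarrow> gdist (Adj n) x y \<le> c2 * \<alpha> n * dist x y + \<alpha>t n"
    using upper[of "2 * R"] R(1) by (metis mult_pos_pos zero_less_numeral)
  define C2 where "C2 = max c2 1"
  define \<delta> where "\<delta> = min R (\<epsilon> / (4 * C2))"
  have C2: "0 < C2" "c2 \<le> C2" by (auto simp: C2_def)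
  have "\<delta> \<le> \<epsilon> / (4 * C2)" by (simp add: \<delta>_def)
  then have "C2 * \<delta> \<le> \<epsilon> / 4" using C2(1) by (simp add: field_simps)
  moreover have "0 < \<delta>" "\<delta> \<le> R" using C2(1) R(1) \<open>\<epsilon> > 0\<close> by (simp_all add: \<delta>_def)
  ultimately have \<delta>: "C2 * \<delta> \<le> \<epsilon> / 4" "0 < \<delta>" "\<delta> \<le> R" by simp_all
  have upper_C2: "gdist (Adj n) x y \<le> C2 * \<alpha> n * dist x y + \<alpha>t n"
    if "n \<ge> N2" "n \<ge> 1" "x \<in> V n \<inter> ball \<rho> (2 * R)" "y \<in> V n \<inter> ball \<rho> (2 * R)" for n x y
  proof -
    have "c2 * (\<alpha> n * dist x y) \<le> C2 * (\<alpha> n * dist x y)"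
      using C2(2) alpha_nonneg[of n] by (intro mult_right_mono) auto
    then show ?thesis using upper_R[OF that] by (simp add: mult.assoc)
  qed
  have K: "compact (F \<inter> cball \<rho> (R - \<delta> / 4))" using F_loc_compact[of "R - \<delta> / 4" \<rho>] \<delta>(2,3) by simp
  have "0 < \<delta> / 8" using \<delta>(2) by simp
  then obtain X where X: "finite X" "X \<subseteq> F \<inter> cball \<rho> (R - \<delta> / 4 + \<delta> / 8) \<inter> Fstar"
      "\<And>z. z \<in> F \<inter> cball \<rho> (R - \<delta> / 4) \<Longrightarrow> \<exists>x\<in>X. dist z x < \<delta> / 8"
    using finite_net_of_cball_in_dense_subset[OF K Fstar_dense Fstar_sub] by blast
  have X_sub: "X \<subseteq> F \<inter> cball \<rho> R \<inter> Fstar" using X(2) \<delta>(2) by auto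
  have "eventually (\<lambda>n. gball (V n) (Adj n) \<rho> (c1 * \<alpha> n * R) \<subseteq>
      (\<Union>x\<in>X. gball (V n) (Adj n) (g n x) (\<alpha> n * \<epsilon>))) sequentially"
    using X_sub R(1)
    by (intro eventually_gball_subset_net_gballs[OF graphs rho_vertex rho_F g_def alpha_nonneg alpha_lim
          alphat_small c1_pos lower upper_C2 _ hausdorff _ X(3) \<delta>(2,3) _ \<delta>(1) \<open>\<epsilon> > 0\<close>]
          F_loc_compact) (auto simp: less_imp_le C2(1))
  moreover have "c1 * \<alpha> n * R = \<alpha> n * r" for n using R(2) by (simp add: algebra_simps)
  ultimately obtain N where "\<And>n. n \<ge> N \<Longrightarrow>
      gball (V n) (Adj n) \<rho> (\<alpha> n * r) \<subseteq> (\<Union>x\<in>X. gball (V n) (Adj n) (g n x) (\<alpha> n * \<epsilon>))"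
    unfolding eventually_sequentially by auto
  with X(1) X_sub show "\<exists>X. finite X \<and> X \<subseteq> F \<inter> cball \<rho> (r / c1) \<inter> Fstar \<and>
      (\<exists>n0\<ge>1. \<forall>n\<ge>n0. gball (V n) (Adj n) \<rho> (\<alpha> n * r) \<subseteq> (\<Union>x\<in>X. gball (V n) (Adj n) (g n x) (\<alpha> n * \<epsilon>)))"
    unfolding R_def by (intro exI[of _ X] conjI exI[of _ "max N 1"]) auto
qed

end
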